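(* Let $H=(V,E,C,\ell)$ be an edge-colored graph with $k$ colors, $x$ a feasible solution of the \textsc{MinECC} LP relaxation, $e=\{u,v\}\in E$ with color $c$ and $x_e=\max\{x_u^c,x_v^c\}$, and $z_0,z_1,\dots$ the color thresholds of $e$. Let $Y$ be the output of GenColorRound applied to $x$ with $I=(\frac12,\frac78)$. Suppose $x_e\in[\frac12,\frac34)$ and there are integers $1\le p\le q$ with $z_{p-1}\le x_e\le z_p\le z_q\le\frac78\le z_{q+1}$. Then $p\le5$, $q\le10$, and $\Pr[e\in\mathcal M_Y]\le\frac83B_{p,q}\,x_e$, where $B_{p,q}$ is the optimal value of the linear program in real variables $\omega_1,\dots,\omega_{10},\chi$: maximize $\frac1p+\left(\frac{q}{q+1}\cdot\frac78-\frac12\right)\chi-\sum_{j=p}^q\frac{1}{j(j+1)}\omega_j$ subject to $\omega_i\le\omega_{i+1}$ for $i=1,\dots,9$; $\chi-\omega_1\le1$; $2\chi-\omega_2-\omega_3\le1$; $3\chi-\omega_3-\omega_4-\omega_5\le1$; $4\chi-4\omega_7\le1$; $\omega_{p-1}\le1$ (this constraint is omitted when $p=1$); $\omega_p\ge1$; $\omega_q\le\frac78\chi$.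
   Context: An edge-colored graph is $H=(V,E,C,\ell)$ with colors $C=[k]$, $\ell\colon E\to C$, where every edge is a set of exactly two nodes. A node coloring $Y\colon V\to C$ makes a mistake at $e$ ($e\in\mathcal M_Y$) if some $w\in e$ has $Y[w]\ne\ell(e)$. The \textsc{MinECC} LP relaxation constraints: $\sum_{i=1}^k x_w^i=k-1$ for all $w\in V$; $x_e\ge x_w^{\ell(e)}$ for $w\in e$; $0\le x_w^i\le1$; $0\le x_e\le 1$. Color thresholds of $e$ with color $c$: for $j\in C\setminus\{c\}$ let $m_j=\min_{w\in e}x_w^j$, sorted as $m_{(1)}\le\dots\le m_{(k-1)}$; $z_0=0$, $z_i=m_{(i)}$ for $1\le i\le k-1$, and by convention $z_i=1$ for $i\ge k$. GenColorRound with interval $I$, applied to $x$: draw $\rho$ uniformly from $I$ and, independently, a uniformly random permutation $\pi$ of $[k]$; let $S_i=\{w: x_w^i<\rho\}$; for $w\in\bigcup_iS_i$ set $Y[w]=\pi(j)$ with $j$ the largest index such that $w\in S_{\pi(j)}$; other nodes get an arbitrary color. *)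

theory Defs
  imports "HOL-Analysis.Analysis" "HOL-Combinatorics.Permutations"
begin

definition edge_colored_graph ::
  "'v set \<Rightarrow> 'v set set \<Rightarrow> nat \<Rightarrow> ('v set \<Rightarrow> nat) \<Rightarrow> bool" where
  "edge_colored_graph V E k lab \<longleftrightarrow>
     finite V \<and> (\<forall>e\<in>E. e \<subseteq> V \<and> card e = 2) \<and> (\<forall>e\<in>E. lab e \<in> {1..k})"

definition minecc_lp_feasible ::
  "'v set \<Rightarrow> 'v set set \<Rightarrow> nat \<Rightarrow> ('v set \<Rightarrow> nat) \<Rightarrow> ('v \<Rightarrow> nat \<Rightarrow> real)
     \<Rightarrow> ('v set \<Rightarrow> real) \<Rightarrow> bool" where
  "minecc_lp_feasible V E k lab x xe \<longleftrightarrow>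
     (\<forall>w\<in>V. (\<Sum>i=1..k. x w i) = real k - 1) \<and>
     (\<forall>e\<in>E. \<forall>w\<in>e. xe e \<ge> x w (lab e)) \<and>
     (\<forall>w\<in>V. \<forall>i\<in>{1..k}. 0 \<le> x w i \<and> x w i \<le> 1) \<and>
     (\<forall>e\<in>E. 0 \<le> xe e \<and> xe e \<le> 1)"

definition color_thresholds ::
  "('v \<Rightarrow> nat \<Rightarrow> real) \<Rightarrow> nat \<Rightarrow> 'v set \<Rightarrow> nat \<Rightarrow> nat \<Rightarrow> real" where
  "color_thresholds x k e c i =
     (let ms = sort (map (\<lambda>j. Min ((\<lambda>w. x w j) ` e)) (filter (\<lambda>j. j \<noteq> c) [1..<k+1]))
      in if i = 0 then 0 else if i \<le> k - 1 then ms ! (i - 1) else 1)"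

text \<open>Color assigned to node w by GenColorRound for threshold rho and permutation pi;
  nodes in no S_i get the (arbitrary) default color dflt w.\<close>
definition gcr_color ::
  "('v \<Rightarrow> nat \<Rightarrow> real) \<Rightarrow> nat \<Rightarrow> ('v \<Rightarrow> nat) \<Rightarrow> real \<Rightarrow> (nat \<Rightarrow> nat) \<Rightarrow> 'v \<Rightarrow> nat" where
  "gcr_color x k dflt \<rho> \<pi> w =
     (if \<exists>j\<in>{1..k}. x w (\<pi> j) < \<rho>
      then \<pi> (GREATEST j. j \<in> {1..k} \<and> x w (\<pi> j) < \<rho>)
      else dflt w)"

text \<open>Probability that GenColorRound with interval (a,b) makes a mistake at edge e of color c:
  rho uniform on (a,b), pi uniform over permutations of {1..k}, independent.\<close>
definition gcr_mistake_prob ::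
  "('v \<Rightarrow> nat \<Rightarrow> real) \<Rightarrow> nat \<Rightarrow> ('v \<Rightarrow> nat) \<Rightarrow> real \<Rightarrow> real \<Rightarrow> 'v set \<Rightarrow> nat \<Rightarrow> real" where
  "gcr_mistake_prob x k dflt a b e c =
     (\<Sum>\<pi>\<in>{\<pi>. \<pi> permutes {1..k}}.
        measure lborel {\<rho> \<in> {a<..<b}. \<exists>w\<in>e. gcr_color x k dflt \<rho> \<pi> w \<noteq> c} / (b - a))
     / real (card {\<pi>. \<pi> permutes {1..k}})"

definition B_feasible :: "nat \<Rightarrow> nat \<Rightarrow> (nat \<Rightarrow> real) \<Rightarrow> real \<Rightarrow> bool" where
  "B_feasible p q \<omega> chi \<longleftrightarrow>
     (\<forall>i\<in>{1..9}. \<omega> i \<le> \<omega> (Suc i)) \<and>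
     chi - \<omega> 1 \<le> 1 \<and>
     2 * chi - \<omega> 2 - \<omega> 3 \<le> 1 \<and>
     3 * chi - \<omega> 3 - \<omega> 4 - \<omega> 5 \<le> 1 \<and>
     4 * chi - 4 * \<omega> 7 \<le> 1 \<and>
     (p \<noteq> 1 \<longrightarrow> \<omega> (p - 1) \<le> 1) \<and>
     \<omega> p \<ge> 1 \<and>
     \<omega> q \<le> 7/8 * chi"

definition B_objective :: "nat \<Rightarrow> nat \<Rightarrow> (nat \<Rightarrow> real) \<Rightarrow> real \<Rightarrow> real" where
  "B_objective p q \<omega> chi =
     1 / real p + (real q / (real q + 1) * (7/8) - 1/2) * chi
     - (\<Sum>j=p..q. \<omega> j / (real j * (real j + 1)))"

text \<open>Optimal value of the maximization LP (only omega_1..omega_10 occur when p \<le> 5, q \<le> 10).\<close>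
definition B_val :: "nat \<Rightarrow> nat \<Rightarrow> real" where
  "B_val p q = Sup {B_objective p q \<omega> chi | \<omega> chi. B_feasible p q \<omega> chi}"

end

theory Submission
  imports Defs
begin

text \<open>
  Split the part of the window above \<open>x\<^sub>e\<close> at the thresholds \<open>z\<^sub>p, \<dots>, z\<^sub>q\<close>. For \<open>\<rho>\<close> in the
  \<open>i\<close>-th piece at most \<open>i\<close> colors other than \<open>c\<close> have a node value below \<open>\<rho>\<close> at an endpoint, and
  if \<open>\<pi>\<close> ranks \<open>c\<close> after all of them both endpoints receive \<open>c\<close>; this happens for at least a
  \<open>1/(i+1)\<close> fraction of the permutations. Charging all of \<open>(1/2, x\<^sub>e]\<close> as a mistake, the mistake
  probability is at most \<open>8/3\<close> times \<open>(x\<^sub>e - 1/2) + \<Sum>\<^sub>i i/(i+1) \<cdot> |piece i|\<close>, which telescopes to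
  \<open>x\<^sub>e\<close> times the objective at \<open>\<omega>\<^sub>j = z\<^sub>j / x\<^sub>e\<close>, \<open>\<chi> = 1/x\<^sub>e\<close>.

  Feasibility of that point, as well as \<open>p \<le> 5\<close> and \<open>q \<le> 10\<close>, comes from the LP at the two
  endpoints: every threshold is attained at \<open>u\<close> or at \<open>v\<close>, so among any \<open>2r - 1\<close> thresholds
  \<open>r\<close> are attained at the same endpoint \<open>w\<close>, while the values \<open>1 - x\<^sub>w\<^sup>j\<close> of the colors
  \<open>j \<noteq> c\<close> sum to \<open>x\<^sub>w\<^sup>c \<le> x\<^sub>e\<close>.
\<close>

section \<open>Permutations ranking a given element last\<close>

definition perms_last_in :: "'a::linorder set \<Rightarrow> 'a set \<Rightarrow> 'a \<Rightarrow> ('a \<Rightarrow> 'a) set" where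
  "perms_last_in S U s =
     {\<pi>. \<pi> permutes S \<and> (\<forall>a\<in>S. \<forall>b\<in>S. \<pi> b = s \<and> \<pi> a \<in> U - {s} \<longrightarrow> a < b)}"

lemma perms_last_in_subset: "perms_last_in S U s \<subseteq> {\<pi>. \<pi> permutes S}"
  by (auto simp: perms_last_in_def)

lemma card_perms_last_in_le:
  assumes "finite S" and "U \<subseteq> S" and "c \<in> U" and "s \<in> U"
  shows "card (perms_last_in S U s) \<le> card (perms_last_in S U c)"
proof (rule card_inj_on_le)
  let ?swap = "\<lambda>\<pi>. Transposition.transpose c s \<circ> \<pi>"
  show "inj_on ?swap (perms_last_in S U s)"
  proof (rule inj_onI)
    fix \<pi>1 \<pi>2 :: "'a \<Rightarrow> 'a"
    assume "?swap \<pi>1 = ?swap \<pi>2"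
    then have "Transposition.transpose c s \<circ> ?swap \<pi>1 = Transposition.transpose c s \<circ> ?swap \<pi>2"
      by simp
    then show "\<pi>1 = \<pi>2" by (simp add: comp_assoc[symmetric])
  qed
  show "finite (perms_last_in S U c)"
    using finite_permutations[OF \<open>finite S\<close>] perms_last_in_subset by (rule finite_subset[rotated])
  show "?swap ` perms_last_in S U s \<subseteq> perms_last_in S U c"
  proof
    fix \<sigma> assume "\<sigma> \<in> ?swap ` perms_last_in S U s"
    then obtain \<pi> where \<pi>: "\<pi> \<in> perms_last_in S U s" and \<sigma>: "\<sigma> = ?swap \<pi>" by auto
    have "\<sigma> permutes S"
      using \<pi> assms unfolding \<sigma> perms_last_in_def by (auto intro!: permutes_compose permutes_swap_id)
    moreover have "a < b" if "a \<in> S" "b \<in> S" "\<sigma> b = c" "\<sigma> a \<in> U - {c}" for a b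
    proof -
      have "\<pi> b = s" and "\<pi> a \<in> U - {s}"
        using that(3,4) assms(3,4) unfolding \<sigma> by (auto simp: transpose_eq_iff)
      then show ?thesis using \<pi> that(1,2) by (auto simp: perms_last_in_def)
    qed
    ultimately show "\<sigma> \<in> perms_last_in S U c" by (auto simp: perms_last_in_def)
  qed
qed

text \<open>Every permutation ranks some element of \<open>U\<close> last, and by symmetry each element is
  ranked last equally often.\<close>

lemma card_permutes_le_card_mult_perms_last_in:
  assumes "finite S" and "U \<subseteq> S" and "c \<in> U"
  shows "card {\<pi>. \<pi> permutes S} \<le> card U * card (perms_last_in S U c)"
proof -
  have "finite U" using assms finite_subset by auto
  have "{\<pi>. \<pi> permutes S} \<subseteq> (\<Union>s\<in>U. perms_last_in S U s)"
  proof
    fix \<pi> assume "\<pi> \<in> {\<pi>. \<pi> permutes S}"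
    then have \<pi>: "\<pi> permutes S" by simp
    define Pos where "Pos = {a\<in>S. \<pi> a \<in> U}"
    have "inv \<pi> c \<in> Pos"
      using \<pi> assms by (auto simp: Pos_def permutes_inverses permutes_in_image[OF permutes_inv[OF \<pi>]])
    then have "Pos \<noteq> {}" by auto
    moreover have "finite Pos" using \<open>finite S\<close> by (simp add: Pos_def)
    ultimately have b: "Max Pos \<in> Pos" "\<And>a. a \<in> Pos \<Longrightarrow> a \<le> Max Pos" by auto
    have "a < Max Pos" if "a \<in> S" "\<pi> a \<in> U - {\<pi> (Max Pos)}" for a
      using b(2)[of a] that by (fastforce simp: Pos_def)
    then have "\<pi> \<in> perms_last_in S U (\<pi> (Max Pos))"
      using \<pi> permutes_inj[OF \<pi>] by (auto simp: perms_last_in_def dest: injD)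
    moreover have "\<pi> (Max Pos) \<in> U" using b by (simp add: Pos_def)
    ultimately show "\<pi> \<in> (\<Union>s\<in>U. perms_last_in S U s)" by blast
  qed
  then have "card {\<pi>. \<pi> permutes S} \<le> card (\<Union>s\<in>U. perms_last_in S U s)"
    using \<open>finite U\<close> finite_permutations[OF \<open>finite S\<close>] perms_last_in_subset
    by (intro card_mono) (auto intro: finite_subset[OF perms_last_in_subset])
  also have "\<dots> \<le> (\<Sum>s\<in>U. card (perms_last_in S U s))"
    using \<open>finite U\<close> by (rule card_UN_le)
  also have "\<dots> \<le> (\<Sum>s\<in>U. card (perms_last_in S U c))"
    using card_perms_last_in_le[OF assms] by (intro sum_mono) auto
  finally show ?thesis by simp
qed

lemma sum_le_sum_top_of_mono:
  fixes f :: "nat \<Rightarrow> 'a::ordered_comm_monoid_add"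
  assumes "mono f" and "Q \<subseteq> {..<n}"
  shows "sum f Q \<le> sum f {n - card Q..<n}"
  using assms(2)
proof (induction n arbitrary: Q)
  case 0
  then show ?case by simp
next
  case (Suc n)
  have "finite Q" using Suc.prems finite_subset by blast
  show ?case
  proof (cases "n \<in> Q")
    case True
    have sub: "Q - {n} \<subseteq> {..<n}" using Suc.prems by auto
    have "card Q = Suc (card (Q - {n}))"
      using card_Suc_Diff1[OF \<open>finite Q\<close> True] by simp
    then have eq: "Suc n - card Q = n - card (Q - {n})" by simp
    have "sum f Q = f n + sum f (Q - {n})"
      using True \<open>finite Q\<close> by (simp add: sum.remove)
    also have "\<dots> \<le> f n + sum f {Suc n - card Q..<n}"
      using Suc.IH[OF sub] unfolding eq by (rule add_left_mono)
    also have "\<dots> = sum f {Suc n - card Q..<Suc n}"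
      unfolding eq using sum.atLeastLessThan_Suc[OF diff_le_self, of f n] by (simp add: add.commute)
    finally show ?thesis .
  next
    case False
    then have sub: "Q \<subseteq> {..<n}" using Suc.prems by (auto simp: less_Suc_eq)
    then have "card Q \<le> n" using card_mono[OF _ sub] by simp
    have "sum f Q \<le> sum f {n - card Q..<n}" using Suc.IH[OF sub] .
    also have "\<dots> \<le> (\<Sum>i\<in>{n - card Q..<n}. f (Suc i))"
      using \<open>mono f\<close> by (intro sum_mono) (simp add: monoD)
    also have "\<dots> = sum f {Suc n - card Q..<Suc n}"
      using \<open>card Q \<le> n\<close> by (simp only: sum.shift_bounds_Suc_ivl Suc_diff_le)
    finally show ?thesis .
  qed
qed

lemma sum_weighted_gaps:
  fixes Z :: "nat \<Rightarrow> real"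
  assumes "1 \<le> p" and "p \<le> q"
  shows "(\<Sum>i\<in>{p-1..<q}. (Z (Suc i) - (if i = p - 1 then X else Z i)) * (real i / (real i + 1)))
    = Z q * (real q / (real q + 1)) - X * ((real p - 1) / real p)
      - (\<Sum>j=p..q. Z j / (real j * (real j + 1)))"
  using assms(2)
proof (induction q rule: dec_induct)
  case base
  have "{p-1..<p} = {p-1}" and "real (p - 1) = real p - 1" and "real p > 0"
    and "real p + real p * real p > 0"
    using assms(1) by (auto simp: add_pos_pos)
  then show ?case by (simp add: divide_simps) (simp add: algebra_simps)
next
  case (step n)
  have "{p-1..<Suc n} = insert n {p-1..<n}" and "{p..Suc n} = insert (Suc n) {p..n}"
    and "n \<noteq> p - 1"
    using step assms(1) by auto
  moreover have "real n + 1 > 0" "real n + 2 > 0" by auto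
  ultimately show ?case using step.IH by (simp add: divide_simps) (simp add: algebra_simps)
qed

lemma sum_weighted_window_gaps:
  fixes Z :: "nat \<Rightarrow> real"
  assumes "1 \<le> p" and "p \<le> q"
  shows "(\<Sum>i\<in>{p-1..q}. ((if i = q then Y else Z (Suc i)) - (if i = p - 1 then X else Z i))
            * (real i / (real i + 1)))
    = Y * (real q / (real q + 1)) - X * ((real p - 1) / real p)
      - (\<Sum>j=p..q. Z j / (real j * (real j + 1)))"
proof -
  have "{p-1..q} = insert q {p-1..<q}" and "q \<noteq> p - 1" using assms by auto
  moreover have "(\<Sum>i\<in>{p-1..<q}. ((if i = q then Y else Z (Suc i)) - (if i = p - 1 then X else Z i))
      * (real i / (real i + 1)))
    = (\<Sum>i\<in>{p-1..<q}. (Z (Suc i) - (if i = p - 1 then X else Z i)) * (real i / (real i + 1)))"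
    by (intro sum.cong) auto
  ultimately show ?thesis using sum_weighted_gaps[OF assms, of Z X] by (simp add: field_simps)
qed

section \<open>The linear program \<open>B\<^sub>p\<^sub>,\<^sub>q\<close>\<close>

lemma B_feasible_mono:
  assumes "B_feasible p q \<omega> chi" and "1 \<le> i" and "i \<le> j" and "j \<le> 10"
  shows "\<omega> i \<le> \<omega> j"
  using assms(3,4)
proof (induction j rule: dec_induct)
  case (step n)
  then have "\<omega> n \<le> \<omega> (Suc n)" using assms(1,2) by (auto simp: B_feasible_def)
  with step show ?case by simp
qed simp

lemma B_objective_le_4:
  assumes "1 \<le> p" and "p \<le> q" and "q \<le> 10" and F: "B_feasible p q \<omega> chi"
  shows "B_objective p q \<omega> chi \<le> 4"
proof -
  have "1 \<le> \<omega> p" and "\<omega> q \<le> 7/8 * chi" and "chi - \<omega> 1 \<le> 1"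
    using F by (simp_all add: B_feasible_def)
  moreover have "\<omega> 1 \<le> \<omega> q" and "\<omega> p \<le> \<omega> q"
    using B_feasible_mono[OF F] assms(1-3) by auto
  ultimately have "0 < chi" and "chi \<le> 8" by linarith+
  have "0 \<le> (\<Sum>j=p..q. \<omega> j / (real j * (real j + 1)))"
  proof (intro sum_nonneg)
    fix j assume "j \<in> {p..q}"
    then have "\<omega> p \<le> \<omega> j" using B_feasible_mono[OF F] assms(1,3) by auto
    then show "0 \<le> \<omega> j / (real j * (real j + 1))" using \<open>1 \<le> \<omega> p\<close> by simp
  qed
  moreover have "1 / real p \<le> 1" using assms(1) by simp
  moreover have "real q / (real q + 1) * (7/8) - 1/2 \<le> 3/8"
    by (simp add: field_simps)
  then have "(real q / (real q + 1) * (7/8) - 1/2) * chi \<le> 3/8 * chi"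
    using \<open>0 < chi\<close> by (intro mult_right_mono) auto
  ultimately show ?thesis using \<open>chi \<le> 8\<close> unfolding B_objective_def by linarith
qed

lemma B_objective_le_B_val:
  assumes "1 \<le> p" and "p \<le> q" and "q \<le> 10" and "B_feasible p q \<omega> chi"
  shows "B_objective p q \<omega> chi \<le> B_val p q"
  unfolding B_val_def
proof (rule cSup_upper)
  show "B_objective p q \<omega> chi \<in> {B_objective p q \<omega> chi |\<omega> chi. B_feasible p q \<omega> chi}"
    using assms(4) by blast
  show "bdd_above {B_objective p q \<omega> chi |\<omega> chi. B_feasible p q \<omega> chi}"
    using B_objective_le_4[OF assms(1-3)] by (auto intro!: bdd_aboveI[where M = 4])
qed

section \<open>Thresholds of an edge and the LP at its endpoints\<close>

lemma map_sort_key: "map f (sort_key f xs) = sort (map f xs)"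
proof -
  have "map f (insort_key f a ys) = insort (f a) (map f ys)" for a ys
    by (induction ys) auto
  then show ?thesis by (induction xs) auto
qed

locale edge_thresholds =
  fixes k c :: nat and x :: "'v \<Rightarrow> nat \<Rightarrow> real" and u v :: 'v and X :: real
  assumes u_neq_v: "u \<noteq> v" and c_color: "c \<in> {1..k}"
    and sum_x: "\<And>w. w \<in> {u, v} \<Longrightarrow> (\<Sum>i=1..k. x w i) = real k - 1"
    and x_bounds: "\<And>w i. w \<in> {u, v} \<Longrightarrow> i \<in> {1..k} \<Longrightarrow> 0 \<le> x w i \<and> x w i \<le> 1"
    and x_c_le: "\<And>w. w \<in> {u, v} \<Longrightarrow> x w c \<le> X"
begin

definition min_x :: "nat \<Rightarrow> real" where
  "min_x j = min (x u j) (x v j)"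

definition sorted_colors :: "nat list" where
  "sorted_colors = sort_key min_x (filter (\<lambda>j. j \<noteq> c) [1..<k+1])"

definition z :: "nat \<Rightarrow> real" where
  "z i = color_thresholds x k {u, v} c i"

definition owner :: "nat \<Rightarrow> 'v" where
  "owner i = (if x u (sorted_colors ! (i - 1)) \<le> x v (sorted_colors ! (i - 1)) then u else v)"

lemma set_sorted_colors: "set sorted_colors = {1..k} - {c}"
  by (auto simp: sorted_colors_def)

lemma distinct_sorted_colors: "distinct sorted_colors"
  by (simp add: sorted_colors_def)

lemma length_sorted_colors: "length sorted_colors = k - 1"
  using c_color distinct_card[OF distinct_sorted_colors]
  by (simp add: set_sorted_colors card_Diff_singleton)

lemma z_eq: "z i = (if i = 0 then 0 else if i \<le> k - 1 then min_x (sorted_colors ! (i - 1)) else 1)"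
proof -
  have "(\<lambda>j. Min ((\<lambda>w. x w j) ` {u, v})) = min_x" by (auto simp: min_x_def fun_eq_iff)
  then have "z i = (let ms = map min_x sorted_colors in
                    if i = 0 then 0 else if i \<le> k - 1 then ms ! (i - 1) else 1)"
    by (simp add: z_def color_thresholds_def sorted_colors_def map_sort_key)
  then show ?thesis using length_sorted_colors by (auto simp: Let_def)
qed

lemma sorted_colors_in: "i < k - 1 \<Longrightarrow> sorted_colors ! i \<in> {1..k} - {c}"
  using set_sorted_colors length_sorted_colors nth_mem by metis

lemma min_x_bounds: "j \<in> {1..k} \<Longrightarrow> 0 \<le> min_x j \<and> min_x j \<le> 1"
  using x_bounds[of u j] x_bounds[of v j] by (auto simp: min_x_def)

lemma z_bounds: "0 \<le> z i \<and> z i \<le> 1"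
proof (cases "i = 0 \<or> k - 1 < i")
  case False
  then have "sorted_colors ! (i - 1) \<in> {1..k}" using sorted_colors_in[of "i - 1"] by auto
  then show ?thesis using False min_x_bounds by (simp add: z_eq)
qed (auto simp: z_eq)

lemma mono_z: "mono z"
proof (rule monoI)
  fix i j :: nat assume "i \<le> j"
  show "z i \<le> z j"
  proof (cases "i = 0 \<or> k - 1 < j")
    case True
    then show ?thesis using z_bounds[of i] z_bounds[of j] by (auto simp: z_eq)
  next
    case False
    then have "map min_x sorted_colors ! (i - 1) \<le> map min_x sorted_colors ! (j - 1)"
      using \<open>i \<le> j\<close> length_sorted_colors
      by (intro sorted_nth_mono) (auto simp: sorted_colors_def)
    moreover have "i - 1 < length sorted_colors" "j - 1 < length sorted_colors"
      using False \<open>i \<le> j\<close> length_sorted_colors by auto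
    ultimately show ?thesis using False \<open>i \<le> j\<close> by (simp add: z_eq)
  qed
qed

lemma z_eq_x_owner: "1 \<le> i \<Longrightarrow> i \<le> k - 1 \<Longrightarrow> z i = x (owner i) (sorted_colors ! (i - 1))"
  by (auto simp: z_eq min_x_def owner_def)

lemma sum_one_minus_x_le_x_c:
  assumes w: "w \<in> {u, v}" and J: "J \<subseteq> {1..k} - {c}"
  shows "(\<Sum>j\<in>J. 1 - x w j) \<le> x w c"
proof -
  have "(\<Sum>j\<in>J. 1 - x w j) \<le> (\<Sum>j\<in>{1..k} - {c}. 1 - x w j)"
    using J x_bounds[OF w] by (intro sum_mono2) auto
  also have "\<dots> = real (k - 1) - (\<Sum>j\<in>{1..k} - {c}. x w j)"
    using c_color by (simp add: sum_subtractf card_Diff_singleton)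
  also have "(\<Sum>j\<in>{1..k} - {c}. x w j) = real k - 1 - x w c"
    using sum.remove[of "{1..k}" c "x w"] sum_x[OF w] c_color by simp
  finally show ?thesis using c_color by (simp add: of_nat_diff)
qed

lemma sum_one_minus_z_le_if_owned:
  assumes w: "w \<in> {u, v}" and "finite Q" and "0 \<notin> Q"
    and owned: "\<And>i. i \<in> Q \<Longrightarrow> i \<le> k - 1 \<Longrightarrow> owner i = w"
  shows "(\<Sum>i\<in>Q. 1 - z i) \<le> X"
proof -
  let ?Q = "Q \<inter> {..k-1}" and ?col = "\<lambda>i. sorted_colors ! (i - 1)"
  have pos: "1 \<le> i" if "i \<in> Q" for i
    using that assms(3) by (cases i) auto
  have col: "i - 1 < length sorted_colors" if "i \<in> ?Q" for i
    using that pos[of i] length_sorted_colors by auto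
  have "inj_on ?col ?Q"
  proof (rule inj_onI)
    fix i i' assume "i \<in> ?Q" "i' \<in> ?Q" "?col i = ?col i'"
    then have "i - 1 = i' - 1"
      using col nth_eq_iff_index_eq[OF distinct_sorted_colors] by blast
    moreover have "1 \<le> i" "1 \<le> i'" using pos \<open>i \<in> ?Q\<close> \<open>i' \<in> ?Q\<close> by auto
    ultimately show "i = i'" by simp
  qed
  have "(\<Sum>i\<in>Q. 1 - z i) = (\<Sum>i\<in>?Q. 1 - z i)"
    using assms(2) pos by (intro sum.mono_neutral_right) (auto simp: z_eq)
  also have "\<dots> = (\<Sum>i\<in>?Q. 1 - x w (?col i))"
    using pos owned by (intro sum.cong) (auto simp: z_eq_x_owner)
  also have "\<dots> = (\<Sum>j\<in>?col ` ?Q. 1 - x w j)"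
    by (simp only: sum.reindex[OF \<open>inj_on ?col ?Q\<close>] comp_def)
  also have "\<dots> \<le> x w c"
  proof (rule sum_one_minus_x_le_x_c[OF w])
    show "?col ` ?Q \<subseteq> {1..k} - {c}"
      unfolding set_sorted_colors[symmetric] using col by auto
  qed
  also have "\<dots> \<le> X" using x_c_le[OF w] .
  finally show ?thesis .
qed

text \<open>Pigeonhole over the two endpoints.\<close>

lemma exists_subset_sum_one_minus_z_le:
  assumes "finite Q" and "0 \<notin> Q" and "2 * r \<le> card Q + 1"
  obtains Q' where "Q' \<subseteq> Q" and "card Q' = r" and "(\<Sum>i\<in>Q'. 1 - z i) \<le> X"
proof -
  define Qu where "Qu = {i\<in>Q. i \<le> k - 1 \<longrightarrow> owner i = u}"
  have Qv: "i \<le> k - 1 \<Longrightarrow> owner i = v" if "i \<in> Q - Qu" for i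
    using that by (auto simp: Qu_def owner_def)
  have "Qu \<subseteq> Q" by (auto simp: Qu_def)
  then have "card Qu + card (Q - Qu) = card Q"
    using assms(1) card_mono[OF assms(1)] by (simp add: card_Diff_subset finite_subset)
  then consider "r \<le> card Qu" | "r \<le> card (Q - Qu)" using assms(3) by linarith
  then show ?thesis
  proof cases
    case 1
    then obtain T where "T \<subseteq> Qu" "card T = r" by (metis obtain_subset_with_card_n)
    moreover have "(\<Sum>i\<in>T. 1 - z i) \<le> X"
      using \<open>T \<subseteq> Qu\<close> assms(1,2) by (intro sum_one_minus_z_le_if_owned[of u])
        (auto simp: Qu_def intro: finite_subset)
    ultimately show ?thesis using that by (auto simp: Qu_def)
  next
    case 2
    then obtain T where "T \<subseteq> Q - Qu" "card T = r" by (metis obtain_subset_with_card_n)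
    moreover have "(\<Sum>i\<in>T. 1 - z i) \<le> X"
      using \<open>T \<subseteq> Q - Qu\<close> assms(1,2) Qv by (intro sum_one_minus_z_le_if_owned[of v])
        (auto intro: finite_subset)
    ultimately show ?thesis using that by auto
  qed
qed

lemma r_minus_sum_top_z_le: "real r - (\<Sum>i\<in>{r..<2*r}. z i) \<le> X"
proof -
  have "card {1..<2*r} = 2 * r - 1" by simp
  then obtain Q where Q: "Q \<subseteq> {1..<2*r}" "card Q = r" "(\<Sum>i\<in>Q. 1 - z i) \<le> X"
    using exists_subset_sum_one_minus_z_le[of "{1..<2*r}" r] by force
  have "finite Q" using Q(1) finite_subset by blast
  have "(\<Sum>i\<in>Q. z i) \<le> (\<Sum>i\<in>{2*r - card Q..<2*r}. z i)"
    using Q(1) by (intro sum_le_sum_top_of_mono[OF mono_z]) auto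
  then have "real r - (\<Sum>i\<in>{r..<2*r}. z i) \<le> (\<Sum>i\<in>Q. 1 - z i)"
    using Q(2) \<open>finite Q\<close> by (simp add: sum_subtractf)
  then show ?thesis using Q(3) by linarith
qed

lemma r_mult_one_minus_z_le: "real r * (1 - z (2*r - 1)) \<le> X"
proof -
  have "(\<Sum>i\<in>{r..<2*r}. z i) \<le> real (card {r..<2*r}) * z (2*r - 1)"
    using mono_z by (intro sum_bounded_above) (auto simp: monoD)
  then show ?thesis using r_minus_sum_top_z_le[of r] by (simp add: algebra_simps)
qed

end

section \<open>Rounding inside the window \<open>(1/2, 7/8)\<close>\<close>

locale threshold_window = edge_thresholds k c x u v X
  for k c and x :: "'v \<Rightarrow> nat \<Rightarrow> real" and u v :: 'v and X +
  fixes p q :: nat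
  assumes p_pos: "1 \<le> p" and p_le_q: "p \<le> q"
    and X_ge: "1/2 \<le> X" and X_less: "X < 3/4"
    and z_pred_p_le: "z (p - 1) \<le> X" and z_p_ge: "X \<le> z p"
    and z_q_le: "z q \<le> 7/8" and z_Suc_q_ge: "7/8 \<le> z (Suc q)"
begin

text \<open>For \<open>i = p - 1, \<dots>, q\<close> the pieces \<open>(lo i, hi i]\<close> partition \<open>(X, 7/8]\<close>.\<close>

definition lo :: "nat \<Rightarrow> real" where
  "lo i = (if i = p - 1 then X else z i)"

definition hi :: "nat \<Rightarrow> real" where
  "hi i = (if i = q then 7/8 else z (Suc i))"

definition rivals :: "nat \<Rightarrow> nat set" where
  "rivals i = {j \<in> {1..k} - {c}. min_x j < hi i}"

definition good_perms :: "nat \<Rightarrow> (nat \<Rightarrow> nat) set" where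
  "good_perms i = perms_last_in {1..k} (insert c (rivals i)) c"

definition mistakes :: "('v \<Rightarrow> nat) \<Rightarrow> (nat \<Rightarrow> nat) \<Rightarrow> real set" where
  "mistakes dflt \<pi> = {\<rho> \<in> {1/2<..<7/8}. \<exists>w\<in>{u, v}. gcr_color x k dflt \<rho> \<pi> w \<noteq> c}"

lemma p_le_5: "p \<le> 5"
proof (rule ccontr)
  assume "\<not> p \<le> 5"
  then have "z 5 \<le> z (p - 1)" by (intro monoD[OF mono_z]) simp
  moreover have "3 - 3 * z 5 \<le> X" using r_mult_one_minus_z_le[of 3] by (simp add: algebra_simps)
  ultimately show False using z_pred_p_le X_less by linarith
qed

lemma q_le_10: "q \<le> 10"
proof (rule ccontr)
  assume "\<not> q \<le> 10"
  then have "z 11 \<le> z q" by (intro monoD[OF mono_z]) simp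
  moreover have "6 - 6 * z 11 \<le> X" using r_mult_one_minus_z_le[of 6] by (simp add: algebra_simps)
  ultimately show False using z_q_le X_less by linarith
qed

lemma X_le_lo:
  assumes "i \<in> {p-1..q}"
  shows "X \<le> lo i"
proof (cases "i = p - 1")
  case False
  then have "p \<le> i" using assms p_pos by auto
  then show ?thesis using False z_p_ge monoD[OF mono_z, of p i] by (simp add: lo_def)
qed (simp add: lo_def)

lemma lo_le_hi: "i \<in> {p-1..q} \<Longrightarrow> lo i \<le> hi i"
  using p_pos p_le_q z_p_ge z_q_le monoD[OF mono_z, of i "Suc i"]
  by (auto simp: lo_def hi_def)

lemma hi_le_z_Suc: "i \<in> {p-1..q} \<Longrightarrow> hi i \<le> z (Suc i)"
  using z_Suc_q_ge by (auto simp: hi_def)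

lemma card_rivals_le:
  assumes i: "i \<in> {p-1..q}"
  shows "card (rivals i) \<le> i"
proof -
  have "rivals i \<subseteq> (!) sorted_colors ` {..<i}"
  proof
    fix j assume j: "j \<in> rivals i"
    then have "j \<in> set sorted_colors" by (simp add: rivals_def set_sorted_colors)
    then obtain i' where i': "i' < length sorted_colors" "sorted_colors ! i' = j"
      by (metis in_set_conv_nth)
    have "i' < i"
    proof (rule ccontr)
      assume "\<not> i' < i"
      then have "z (Suc i) \<le> z (Suc i')" by (intro monoD[OF mono_z]) simp
      also have "\<dots> = min_x j"
        using i' length_sorted_colors z_eq[of "Suc i'"] by (simp add: Suc_le_eq)
      also have "\<dots> < hi i" using j by (simp add: rivals_def)
      finally show False using hi_le_z_Suc[OF i] by simp
    qed
    then show "j \<in> (!) sorted_colors ` {..<i}" using i' by auto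
  qed
  then have "card (rivals i) \<le> card ((!) sorted_colors ` {..<i})" by (intro card_mono) auto
  also have "\<dots> \<le> card {..<i}" by (rule card_image_le) simp
  finally show ?thesis by simp
qed

lemma card_permutes_le_good_perms:
  assumes "i \<in> {p-1..q}"
  shows "real (card {\<pi>. \<pi> permutes {1..k}}) \<le> (real i + 1) * real (card (good_perms i))"
proof -
  have "finite (rivals i)" and "c \<notin> rivals i" by (simp_all add: rivals_def)
  then have "card (insert c (rivals i)) = card (rivals i) + 1" by simp
  moreover have "card {\<pi>. \<pi> permutes {1..k}} \<le> card (insert c (rivals i)) * card (good_perms i)"
    unfolding good_perms_def using c_color
    by (intro card_permutes_le_card_mult_perms_last_in) (auto simp: rivals_def)
  ultimately have "card {\<pi>. \<pi> permutes {1..k}} \<le> (card (rivals i) + 1) * card (good_perms i)"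
    by simp
  also have "\<dots> \<le> (i + 1) * card (good_perms i)"
    using card_rivals_le[OF assms] by (intro mult_right_mono) auto
  finally have "real (card {\<pi>. \<pi> permutes {1..k}}) \<le> real ((i + 1) * card (good_perms i))"
    by (rule of_nat_mono)
  then show ?thesis by (simp add: algebra_simps)
qed

lemma obtain_piece:
  assumes "X < \<rho>" and "\<rho> < 7/8"
  obtains i where "i \<in> {p-1..q}" and "lo i < \<rho>" and "\<rho> \<le> hi i"
proof -
  define S where "S = {i\<in>{p-1..q}. lo i < \<rho>}"
  define i0 where "i0 = Max S"
  have "p - 1 \<in> S" using assms p_le_q by (simp add: S_def lo_def)
  then have "S \<noteq> {}" and "finite S" by (auto simp: S_def)
  then have "i0 \<in> S" by (simp add: i0_def)
  moreover have "\<rho> \<le> hi i0"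
  proof (cases "i0 = q")
    case False
    then have "Suc i0 \<in> {p-1..q}" and "Suc i0 \<noteq> p - 1" using \<open>i0 \<in> S\<close> by (auto simp: S_def)
    moreover have "Suc i0 \<notin> S" using Max_ge[OF \<open>finite S\<close>, of "Suc i0"] by (auto simp: i0_def)
    ultimately show ?thesis using False by (auto simp: S_def lo_def hi_def)
  qed (use assms in \<open>simp add: hi_def\<close>)
  ultimately show ?thesis using that by (auto simp: S_def)
qed

text \<open>\<open>gcr_color\<close> picks the color with the largest position among those below \<open>\<rho>\<close>, and above
  \<open>X\<close> the color \<open>c\<close> is below \<open>\<rho>\<close> at both endpoints.\<close>

lemma gcr_color_eq_c:
  assumes i: "i \<in> {p-1..q}" and \<pi>: "\<pi> \<in> good_perms i"
    and \<rho>: "lo i < \<rho>" "\<rho> \<le> hi i" and w: "w \<in> {u, v}"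
  shows "gcr_color x k dflt \<rho> \<pi> w = c"
proof -
  have perm: "\<pi> permutes {1..k}" using \<pi> by (simp add: good_perms_def perms_last_in_def)
  define b where "b = inv \<pi> c"
  have b: "b \<in> {1..k}" "\<pi> b = c"
    using c_color permutes_in_image[OF permutes_inv[OF perm]] permutes_inverses(1)[OF perm]
    by (auto simp: b_def)
  have "x w c < \<rho>" using x_c_le[OF w] X_le_lo[OF i] \<rho> by linarith
  have "(GREATEST j. j \<in> {1..k} \<and> x w (\<pi> j) < \<rho>) = b"
  proof (rule Greatest_equality)
    show "b \<in> {1..k} \<and> x w (\<pi> b) < \<rho>" using b \<open>x w c < \<rho>\<close> by simp
    fix j assume j: "j \<in> {1..k} \<and> x w (\<pi> j) < \<rho>"
    show "j \<le> b"
    proof (cases "\<pi> j = c")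
      case True
      then show ?thesis using b permutes_inj[OF perm] by (auto dest: injD)
    next
      case False
      have "\<pi> j \<in> {1..k}" using j by (simp only: permutes_in_image[OF perm])
      moreover have "min_x (\<pi> j) \<le> x w (\<pi> j)" using w by (auto simp: min_x_def)
      ultimately have "\<pi> j \<in> rivals i" using j \<rho> False by (auto simp: rivals_def)
      then have "j < b"
        using \<pi> j b False unfolding good_perms_def perms_last_in_def by blast
      then show ?thesis by simp
    qed
  qed
  then show ?thesis using b \<open>x w c < \<rho>\<close> by (auto simp: gcr_color_def)
qed

lemma measure_mistakes_le:
  assumes "\<pi> permutes {1..k}"
  shows "measure lborel (mistakes dflt \<pi>)
    \<le> (X - 1/2) + (\<Sum>i\<in>{p-1..q}. if \<pi> \<in> good_perms i then 0 else hi i - lo i)"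
proof -
  define I where "I = {i\<in>{p-1..q}. \<pi> \<notin> good_perms i}"
  define R where "R = {1/2<..X} \<union> (\<Union>i\<in>I. {lo i<..hi i})"
  have "finite I" by (simp add: I_def)
  have "mistakes dflt \<pi> \<subseteq> R"
  proof
    fix \<rho> assume "\<rho> \<in> mistakes dflt \<pi>"
    then have \<rho>: "1/2 < \<rho>" "\<rho> < 7/8" and w: "\<exists>w\<in>{u, v}. gcr_color x k dflt \<rho> \<pi> w \<noteq> c"
      by (auto simp: mistakes_def)
    show "\<rho> \<in> R"
    proof (cases "\<rho> \<le> X")
      case False
      then obtain i where i: "i \<in> {p-1..q}" "lo i < \<rho>" "\<rho> \<le> hi i"
        using obtain_piece \<rho> by force
      then have "\<pi> \<notin> good_perms i" using gcr_color_eq_c w by blast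
      then show ?thesis using i by (auto simp: R_def I_def)
    qed (use \<rho> in \<open>simp add: R_def\<close>)
  qed
  moreover have "R \<in> fmeasurable lborel"
  proof (rule fmeasurableI2)
    have "{lo i<..hi i} \<subseteq> {0<..1}" if "i \<in> I" for i
      using that X_le_lo[of i] hi_le_z_Suc[of i] z_bounds[of "Suc i"] X_ge by (force simp: I_def)
    then show "R \<subseteq> {0<..1}" using X_less by (auto simp: R_def)
    show "R \<in> sets lborel" using \<open>finite I\<close> unfolding R_def by (intro sets.Un sets.finite_UN) auto
  qed (simp add: fmeasurable_def)
  ultimately have "measure lborel (mistakes dflt \<pi>) \<le> measure lborel R"
    by (cases "mistakes dflt \<pi> \<in> sets lborel")
      (simp_all add: measure_mono_fmeasurable measure_notin_sets)
  also have "\<dots> \<le> measure lborel {1/2<..X} + measure lborel (\<Union>i\<in>I. {lo i<..hi i})"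
    unfolding R_def using \<open>finite I\<close> by (intro measure_Un_le) auto
  also have "\<dots> \<le> (X - 1/2) + (\<Sum>i\<in>I. measure lborel {lo i<..hi i})"
    using \<open>finite I\<close> X_ge measure_UNION_le[of I "\<lambda>i. {lo i<..hi i}" lborel] by simp
  also have "(\<Sum>i\<in>I. measure lborel {lo i<..hi i}) = (\<Sum>i\<in>I. hi i - lo i)"
    using lo_le_hi by (intro sum.cong) (auto simp: I_def)
  also have "\<dots> = (\<Sum>i\<in>{p-1..q}. if \<pi> \<in> good_perms i then 0 else hi i - lo i)"
    unfolding I_def by (subst sum.inter_filter) (auto intro!: sum.cong)
  finally show ?thesis .
qed

lemma mistake_prob_le:
  "gcr_mistake_prob x k dflt (1/2) (7/8) {u, v} c
     \<le> 8/3 * ((X - 1/2) + (\<Sum>i\<in>{p-1..q}. (hi i - lo i) * (real i / (real i + 1))))"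
proof -
  define Perms where "Perms = {\<pi>. \<pi> permutes {1..k}}"
  define N where "N = real (card Perms)"
  have "finite Perms" by (simp add: Perms_def finite_permutations)
  moreover have "id \<in> Perms" by (simp add: Perms_def)
  ultimately have "N > 0" by (auto simp: N_def card_gt_0_iff)
  have good_sub: "good_perms i \<subseteq> Perms" for i
    using perms_last_in_subset by (simp add: good_perms_def Perms_def)
  have bad: "(\<Sum>\<pi>\<in>Perms. if \<pi> \<in> good_perms i then 0 else hi i - lo i)
      \<le> (hi i - lo i) * (N * (real i / (real i + 1)))" if i: "i \<in> {p-1..q}" for i
  proof -
    have "(\<Sum>\<pi>\<in>Perms. if \<pi> \<in> good_perms i then 0 else hi i - lo i)
        = (hi i - lo i) * (N - real (card (good_perms i)))"
      using \<open>finite Perms\<close> good_sub[of i]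
      by (simp add: sum.If_cases Int_absorb2 Diff_eq[symmetric] card_Diff_subset card_mono
          N_def of_nat_diff finite_subset algebra_simps)
    also have "\<dots> \<le> (hi i - lo i) * (N * (real i / (real i + 1)))"
      using card_permutes_le_good_perms[OF i] lo_le_hi[OF i]
      by (intro mult_left_mono) (auto simp: N_def Perms_def field_simps)
    finally show ?thesis .
  qed
  have "(\<Sum>\<pi>\<in>Perms. measure lborel (mistakes dflt \<pi>))
      \<le> (\<Sum>\<pi>\<in>Perms. (X - 1/2) + (\<Sum>i\<in>{p-1..q}. if \<pi> \<in> good_perms i then 0 else hi i - lo i))"
    using measure_mistakes_le by (intro sum_mono) (auto simp: Perms_def)
  also have "\<dots> = N * (X - 1/2)
      + (\<Sum>i\<in>{p-1..q}. \<Sum>\<pi>\<in>Perms. if \<pi> \<in> good_perms i then 0 else hi i - lo i)"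
    by (simp add: sum.distrib N_def sum.swap[of _ Perms])
  also have "\<dots> \<le> N * (X - 1/2) + (\<Sum>i\<in>{p-1..q}. (hi i - lo i) * (N * (real i / (real i + 1))))"
    using bad by (intro add_left_mono sum_mono) auto
  also have "\<dots> = N * ((X - 1/2) + (\<Sum>i\<in>{p-1..q}. (hi i - lo i) * (real i / (real i + 1))))"
    by (simp add: distrib_left sum_distrib_left mult.left_commute)
  finally have "(\<Sum>\<pi>\<in>Perms. measure lborel (mistakes dflt \<pi>)) / (3/8) / N
      \<le> 8/3 * ((X - 1/2) + (\<Sum>i\<in>{p-1..q}. (hi i - lo i) * (real i / (real i + 1))))"
    using \<open>N > 0\<close> by (simp add: field_simps)
  moreover have "{\<rho> \<in> {1/2<..<7/8}. \<exists>w\<in>{u, v}. gcr_color x k dflt \<rho> \<pi> w \<noteq> c} = mistakes dflt \<pi>"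
    for \<pi> by (simp add: mistakes_def)
  then have "gcr_mistake_prob x k dflt (1/2) (7/8) {u, v} c
      = (\<Sum>\<pi>\<in>Perms. measure lborel (mistakes dflt \<pi>)) / (3/8) / N"
    unfolding gcr_mistake_prob_def Perms_def[symmetric] N_def
    by (simp only: sum_divide_distrib[symmetric]) simp
  ultimately show ?thesis by simp
qed

end

context threshold_window
begin

lemma X_pos: "0 < X"
  using X_ge by simp

lemma B_feasible_scaled: "B_feasible p q (\<lambda>j. z j / X) (1 / X)"
proof -
  have scaled: "a / X \<le> 1" if "a \<le> X" for a using that X_pos by simp
  have "1 - z 1 \<le> X" using r_minus_sum_top_z_le[of 1] by (simp add: numeral_eq_Suc)
  moreover have "2 - z 2 - z 3 \<le> X" using r_minus_sum_top_z_le[of 2] by (simp add: numeral_eq_Suc)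
  moreover have "3 - z 3 - z 4 - z 5 \<le> X"
    using r_minus_sum_top_z_le[of 3] by (simp add: numeral_eq_Suc)
  moreover have "4 - 4 * z 7 \<le> X" using r_mult_one_minus_z_le[of 4] by (simp add: algebra_simps)
  ultimately show ?thesis
    using scaled monoD[OF mono_z] z_pred_p_le z_p_ge z_q_le X_pos
    by (auto simp: B_feasible_def diff_divide_distrib[symmetric] divide_right_mono field_simps)
qed

lemma B_objective_scaled:
  "X * B_objective p q (\<lambda>j. z j / X) (1 / X)
     = (X - 1/2) + (\<Sum>i\<in>{p-1..q}. (hi i - lo i) * (real i / (real i + 1)))"
proof -
  define S where "S = (\<Sum>j=p..q. z j / (real j * (real j + 1)))"
  define a where "a = real q / (real q + 1)"
  have "X * (\<Sum>j=p..q. z j / X / (real j * (real j + 1))) = S"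
    using X_pos by (simp add: S_def sum_distrib_left)
  then have obj: "X * B_objective p q (\<lambda>j. z j / X) (1 / X) = X / real p + (a * (7/8) - 1/2) - S"
    using X_pos unfolding B_objective_def a_def[symmetric] by (simp add: right_diff_distrib distrib_left) (simp add: field_simps)
  have gaps: "(\<Sum>i\<in>{p-1..q}. (hi i - lo i) * (real i / (real i + 1)))
      = 7/8 * a - X * ((real p - 1) / real p) - S"
    unfolding lo_def hi_def S_def a_def by (rule sum_weighted_window_gaps[OF p_pos p_le_q])
  have "X * ((real p - 1) / real p) = X - X / real p"
    using p_pos by (simp add: field_simps)
  then show ?thesis unfolding obj gaps by linarith
qed

lemma mistake_prob_le_B_val:
  "gcr_mistake_prob x k dflt (1/2) (7/8) {u, v} c \<le> 8/3 * B_val p q * X"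
proof -
  have "gcr_mistake_prob x k dflt (1/2) (7/8) {u, v} c
      \<le> 8/3 * (X * B_objective p q (\<lambda>j. z j / X) (1 / X))"
    using mistake_prob_le by (simp only: B_objective_scaled)
  also have "\<dots> \<le> 8/3 * (X * B_val p q)"
    using B_objective_le_B_val[OF p_pos p_le_q q_le_10 B_feasible_scaled] X_pos by simp
  finally show ?thesis by (simp add: algebra_simps)
qed

end

theorem lemma5:
  fixes V :: "'v set" and E :: "'v set set" and k :: nat and lab :: "'v set \<Rightarrow> nat"
    and x :: "'v \<Rightarrow> nat \<Rightarrow> real" and xe :: "'v set \<Rightarrow> real"
    and dflt :: "'v \<Rightarrow> nat" and u v :: 'v and c p q :: nat
  assumes "edge_colored_graph V E k lab"
    and "minecc_lp_feasible V E k lab x xe"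
    and "\<forall>w\<in>V. dflt w \<in> {1..k}"
    and "{u, v} \<in> E" and "lab {u, v} = c"
    and "xe {u, v} = max (x u c) (x v c)"
    and "1/2 \<le> xe {u, v}" and "xe {u, v} < 3/4"
    and "1 \<le> p" and "p \<le> q"
    and "color_thresholds x k {u, v} c (p - 1) \<le> xe {u, v}"
    and "xe {u, v} \<le> color_thresholds x k {u, v} c p"
    and "color_thresholds x k {u, v} c p \<le> color_thresholds x k {u, v} c q"
    and "color_thresholds x k {u, v} c q \<le> 7/8"
    and "7/8 \<le> color_thresholds x k {u, v} c (q + 1)"
  shows "p \<le> 5 \<and> q \<le> 10 \<and>
         gcr_mistake_prob x k dflt (1/2) (7/8) {u, v} c \<le> 8/3 * B_val p q * xe {u, v}"
proof -
  have "{u, v} \<subseteq> V" and "card {u, v} = 2" and "c \<in> {1..k}"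
    using assms(1,4,5) by (auto simp: edge_colored_graph_def)
  moreover from \<open>card {u, v} = 2\<close> have "u \<noteq> v" by (cases "u = v") auto
  ultimately interpret edge_thresholds k c x u v "xe {u, v}"
    using assms(2,6) by unfold_locales (auto simp: minecc_lp_feasible_def)
  interpret threshold_window k c x u v "xe {u, v}" p q
    using assms(7-15) by unfold_locales (simp_all add: z_def)
  show ?thesis using p_le_5 q_le_10 mistake_prob_le_B_val by simp
qed

end
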